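(* Let $\Delta_{\{u_0,u_1,u_2\}}$ be a shortest-path triangle with Gromov product nodes $u_{0,1},u_{0,2},u_{1,2}$, and let $i\in\{0,1,2\}$. Let $v$ be a node on the subpath of $\mathcal P_\Delta(u_i,u_{i+2 \bmod 3})$ from $u_i$ to $u_{i,\,i+2\bmod 3}$, and $v'$ a node on the subpath of $\mathcal P_\Delta(u_i,u_{i+1\bmod 3})$ from $u_i$ to $u_{i,\,i+1\bmod 3}$, such that $d_{u_i,v}=d_{u_i,v'}$. Then $$d_{v,v'}\le 6\,\delta_{\Delta_{\{u_0,u_1,u_2\}}}+2.$$
   Context: $G=(V,E)$ is a finite connected undirected graph with $n\ge 4$ nodes and $d_{u,v}$ denotes the shortest-path distance (number of edges). For any four nodes $w_1,w_2,w_3,w_4$, form the three sums $d_{w_1,w_2}+d_{w_3,w_4}$, $d_{w_1,w_3}+d_{w_2,w_4}$, $d_{w_1,w_4}+d_{w_2,w_3}$, order them as $S\le M\le L$, and set $\delta_{w_1,w_2,w_3,w_4}=(L-M)/2$; $\delta_{\mathrm{worst}}(G)=\max_{w_1,w_2,w_3,w_4\in V}\delta_{w_1,w_2,w_3,w_4}$. A shortest-path triangle $\Delta_{\{u_0,u_1,u_2\}}$ consists of three distinct nodes $u_0,u_1,u_2$ together with chosen shortest paths $\mathcal P_\Delta(u_0,u_1)$, $\mathcal P_\Delta(u_0,u_2)$, $\mathcal P_\Delta(u_1,u_2)$ between the respective pairs. $\delta_{\Delta_{\{u_0,u_1,u_2\}}}$ is the maximum of $\delta_{w_1,w_2,w_3,w_4}$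 over all quadruples of nodes lying on these three paths (so $\delta_\Delta\le\delta_{\mathrm{worst}}(G)$). Gromov product nodes of the triangle are nodes $u_{0,1}\in\mathcal P_\Delta(u_0,u_1)$, $u_{0,2}\in\mathcal P_\Delta(u_0,u_2)$, $u_{1,2}\in\mathcal P_\Delta(u_1,u_2)$ with $d_{u_0,u_{0,1}}+d_{u_1,u_{0,1}}=d_{u_0,u_1}$, $d_{u_0,u_{0,2}}+d_{u_2,u_{0,2}}=d_{u_0,u_2}$, $d_{u_1,u_{1,2}}+d_{u_2,u_{1,2}}=d_{u_1,u_2}$, $d_{u_1,u_{0,1}}=d_{u_1,u_{1,2}}$, and $d_{u_0,u_{0,1}}=d_{u_0,u_{0,2}}=\lfloor (d_{u_0,u_1}+d_{u_0,u_2}-d_{u_1,u_2})/2\rfloor$. By convention $u_{1,0}=u_{0,1}$, $u_{2,0}=u_{0,2}$, $u_{2,1}=u_{1,2}$. *)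

theory Defs
  imports Complex_Main
begin

definition graph_walk :: "'a set \<Rightarrow> ('a \<Rightarrow> 'a \<Rightarrow> bool) \<Rightarrow> 'a list \<Rightarrow> bool" where
  "graph_walk V E xs \<longleftrightarrow> xs \<noteq> [] \<and> set xs \<subseteq> V \<and>
     (\<forall>i. Suc i < length xs \<longrightarrow> E (xs ! i) (xs ! Suc i))"

definition conn_graph :: "'a set \<Rightarrow> ('a \<Rightarrow> 'a \<Rightarrow> bool) \<Rightarrow> bool" where
  "conn_graph V E \<longleftrightarrow> finite V \<and> (\<forall>x y. E x y \<longrightarrow> x \<in> V \<and> y \<in> V) \<and>
     (\<forall>x y. E x y \<longrightarrow> E y x) \<and> (\<forall>x. \<not> E x x) \<and>
     (\<forall>x\<in>V. \<forall>y\<in>V. \<exists>xs. graph_walk V E xs \<and> hd xs = x \<and> last xs = y)"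

definition gdist :: "'a set \<Rightarrow> ('a \<Rightarrow> 'a \<Rightarrow> bool) \<Rightarrow> 'a \<Rightarrow> 'a \<Rightarrow> nat" where
  "gdist V E x y = (LEAST n. \<exists>xs. graph_walk V E xs \<and> hd xs = x \<and> last xs = y \<and> length xs = Suc n)"

definition shortest_path :: "'a set \<Rightarrow> ('a \<Rightarrow> 'a \<Rightarrow> bool) \<Rightarrow> 'a list \<Rightarrow> 'a \<Rightarrow> 'a \<Rightarrow> bool" where
  "shortest_path V E xs x y \<longleftrightarrow> graph_walk V E xs \<and> hd xs = x \<and> last xs = y \<and>
     length xs = Suc (gdist V E x y)"

definition delta_quad :: "'a set \<Rightarrow> ('a \<Rightarrow> 'a \<Rightarrow> bool) \<Rightarrow> 'a \<Rightarrow> 'a \<Rightarrow> 'a \<Rightarrow> 'a \<Rightarrow> real" where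
  "delta_quad V E w1 w2 w3 w4 =
    (let s = sort [gdist V E w1 w2 + gdist V E w3 w4,
                   gdist V E w1 w3 + gdist V E w2 w4,
                   gdist V E w1 w4 + gdist V E w2 w3]
     in (real (s ! 2) - real (s ! 1)) / 2)"

text \<open>delta of a node set (the union of the three triangle sides).\<close>
definition delta_set :: "'a set \<Rightarrow> ('a \<Rightarrow> 'a \<Rightarrow> bool) \<Rightarrow> 'a set \<Rightarrow> real" where
  "delta_set V E S = Max {delta_quad V E w1 w2 w3 w4 | w1 w2 w3 w4.
      w1 \<in> S \<and> w2 \<in> S \<and> w3 \<in> S \<and> w4 \<in> S}"

definition subpath_nodes :: "'a list \<Rightarrow> 'a \<Rightarrow> 'a \<Rightarrow> 'a set" where
  "subpath_nodes P a b = {P ! k | k ka kb. ka < length P \<and> kb < length P \<and>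
      P ! ka = a \<and> P ! kb = b \<and> min ka kb \<le> k \<and> k \<le> max ka kb}"

end

theory Submission
  imports Defs
begin

text \<open>
  Write \<open>j = i + 1\<close>, \<open>l = i + 2\<close> (mod 3) and \<open>k = d(u\<^sub>i, v) = d(u\<^sub>i, v')\<close>. As \<open>v\<close> lies
  between \<open>u\<^sub>i\<close> and the Gromov product node, \<open>k\<close> is at most the (rounded down) Gromov product
  at \<open>u\<^sub>i\<close>, so \<open>2k + d(u\<^sub>j, u\<^sub>l) \<le> d(u\<^sub>i, u\<^sub>j) + d(u\<^sub>i, u\<^sub>l) + 1\<close>. The four-point condition
  for \<open>u\<^sub>i, u\<^sub>l, v', u\<^sub>j\<close> then gives \<open>d(u\<^sub>l, v') \<le> d(u\<^sub>i, u\<^sub>l) - k + 2\<delta> + 1\<close>, and the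
  four-point condition for \<open>u\<^sub>i, v, v', u\<^sub>l\<close> turns this into \<open>d(v, v') \<le> 4\<delta> + 1\<close>, which is
  stronger than the claimed \<open>6\<delta> + 2\<close>.
\<close>

lemma graph_walk_singleton: "x \<in> V \<Longrightarrow> graph_walk V E [x]"
  by (simp add: graph_walk_def)

lemma graph_walk_Cons_Cons:
  "graph_walk V E (x # y # xs) \<longleftrightarrow> x \<in> V \<and> E x y \<and> graph_walk V E (y # xs)"
  unfolding graph_walk_def
  by (auto simp: All_less_Suc2)

lemma graph_walk_append:
  "graph_walk V E xs \<Longrightarrow> graph_walk V E ys \<Longrightarrow> last xs = hd ys \<Longrightarrow> graph_walk V E (xs @ tl ys)"
proof (induction xs rule: induct_list012)
  case 1 then show ?case by (simp add: graph_walk_def)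
next
  case (2 x) then show ?case by (cases ys) (auto simp: graph_walk_def)
next
  case (3 x y xs) then show ?case by (simp add: graph_walk_Cons_Cons)
qed

lemma graph_walk_rev:
  assumes "graph_walk V E xs" and "\<forall>x y. E x y \<longrightarrow> E y x"
  shows "graph_walk V E (rev xs)"
  unfolding graph_walk_def
proof (intro conjI allI impI)
  show "rev xs \<noteq> []" "set (rev xs) \<subseteq> V" using assms(1) by (auto simp: graph_walk_def)
  fix i assume i: "Suc i < length (rev xs)"
  have "E (xs ! (length xs - Suc (Suc i))) (xs ! Suc (length xs - Suc (Suc i)))"
    using assms(1) i unfolding graph_walk_def by simp
  moreover have "Suc (length xs - Suc (Suc i)) = length xs - Suc i" using i by simp
  ultimately show "E (rev xs ! i) (rev xs ! Suc i)"
    using i assms(2) by (simp add: rev_nth)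
qed

lemma graph_walk_take: "graph_walk V E xs \<Longrightarrow> graph_walk V E (take (Suc k) xs)"
  unfolding graph_walk_def by (auto dest: in_set_takeD)

lemma graph_walk_drop: "graph_walk V E xs \<Longrightarrow> k < length xs \<Longrightarrow> graph_walk V E (drop k xs)"
  unfolding graph_walk_def by (auto dest: in_set_dropD)

lemma gdist_le_walk:
  "graph_walk V E xs \<Longrightarrow> hd xs = x \<Longrightarrow> last xs = y \<Longrightarrow> gdist V E x y \<le> length xs - 1"
  unfolding gdist_def by (rule Least_le) (auto simp: graph_walk_def)

lemma shortest_path_exists:
  assumes "conn_graph V E" "x \<in> V" "y \<in> V"
  shows "\<exists>xs. shortest_path V E xs x y"
proof -
  obtain xs where "graph_walk V E xs" "hd xs = x" "last xs = y"
    using assms unfolding conn_graph_def by blast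
  then have "\<exists>n xs. graph_walk V E xs \<and> hd xs = x \<and> last xs = y \<and> length xs = Suc n"
    by (metis graph_walk_def length_greater_0_conv Suc_pred)
  then show ?thesis unfolding shortest_path_def gdist_def by (rule LeastI_ex)
qed

lemma shortest_path_endpoints_in_set:
  "shortest_path V E xs x y \<Longrightarrow> x \<in> set xs \<and> y \<in> set xs"
  unfolding shortest_path_def graph_walk_def by auto

lemma shortest_path_subset_V: "shortest_path V E xs x y \<Longrightarrow> set xs \<subseteq> V"
  unfolding shortest_path_def graph_walk_def by auto

lemma gdist_self: "x \<in> V \<Longrightarrow> gdist V E x x = 0"
  using gdist_le_walk[of V E "[x]" x x] graph_walk_singleton by fastforce

lemma gdist_sym:
  assumes G: "conn_graph V E" and "x \<in> V" "y \<in> V"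
  shows "gdist V E x y = gdist V E y x"
proof -
  have le: "gdist V E b a \<le> gdist V E a b" if ab: "a \<in> V" "b \<in> V" for a b
  proof -
    obtain xs where xs: "shortest_path V E xs a b"
      using shortest_path_exists[OF G ab] by blast
    then have "graph_walk V E (rev xs)"
      using graph_walk_rev G unfolding shortest_path_def conn_graph_def by blast
    then show ?thesis
      using gdist_le_walk[of V E "rev xs" b a] xs
      by (auto simp: shortest_path_def graph_walk_def hd_rev last_rev)
  qed
  show ?thesis using le assms by (simp add: le_antisym)
qed

lemma gdist_triangle:
  assumes G: "conn_graph V E" and "x \<in> V" "y \<in> V" "z \<in> V"
  shows "gdist V E x z \<le> gdist V E x y + gdist V E y z"
proof -
  obtain xs ys where xs: "shortest_path V E xs x y" and ys: "shortest_path V E ys y z"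
    using shortest_path_exists[OF G] assms by metis
  then have "graph_walk V E (xs @ tl ys)"
    using graph_walk_append unfolding shortest_path_def by metis
  moreover have "hd (xs @ tl ys) = x" "last (xs @ tl ys) = z"
    using xs ys unfolding shortest_path_def graph_walk_def
    by (auto simp: last_append last_tl) (metis last_ConsL list.collapse)
  ultimately show ?thesis
    using gdist_le_walk xs ys unfolding shortest_path_def by fastforce
qed

lemma gdist_shortest_path_nth:
  assumes G: "conn_graph V E" and Q: "shortest_path V E Q x y" and k: "k < length Q"
  shows "gdist V E x (Q ! k) = k" and "gdist V E (Q ! k) y = gdist V E x y - k"
proof -
  have w: "graph_walk V E Q" and h: "hd Q = x" and l: "last Q = y"
    and len: "length Q = Suc (gdist V E x y)"
    using Q unfolding shortest_path_def by auto
  have V: "x \<in> V" "Q ! k \<in> V" "y \<in> V"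
    using shortest_path_endpoints_in_set[OF Q] shortest_path_subset_V[OF Q] k by auto
  have "last (take (Suc k) Q) = Q ! k"
    using k by (subst last_conv_nth) auto
  then have "gdist V E x (Q ! k) \<le> k"
    using gdist_le_walk[OF graph_walk_take[OF w, of k]] h k by simp
  moreover have "gdist V E (Q ! k) y \<le> gdist V E x y - k"
    using gdist_le_walk[OF graph_walk_drop[OF w k]] k l len by (simp add: hd_drop_conv_nth)
  moreover have "gdist V E x y \<le> gdist V E x (Q ! k) + gdist V E (Q ! k) y"
    using gdist_triangle[OF G V] .
  ultimately show "gdist V E x (Q ! k) = k" "gdist V E (Q ! k) y = gdist V E x y - k"
    using len k by linarith+
qed

lemma gdist_shortest_path_node:
  assumes "conn_graph V E" "shortest_path V E Q x y" "v \<in> set Q"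
  shows "gdist V E x v + gdist V E v y = gdist V E x y"
  using assms gdist_shortest_path_nth[OF assms(1,2)]
  by (auto simp: in_set_conv_nth shortest_path_def)

lemma subpath_nodes_subset: "subpath_nodes Q a b \<subseteq> set Q"
  unfolding subpath_nodes_def by auto

lemma gdist_subpath_nodes_le:
  assumes G: "conn_graph V E" and Q: "shortest_path V E Q x y" and v: "v \<in> subpath_nodes Q x b"
  shows "gdist V E x v \<le> gdist V E x b"
proof -
  obtain k ka kb where v: "v = Q ! k" and ka: "ka < length Q" "Q ! ka = x"
    and kb: "kb < length Q" "Q ! kb = b" and k: "min ka kb \<le> k" "k \<le> max ka kb"
    using v unfolding subpath_nodes_def by blast
  have "ka = 0"
    using gdist_shortest_path_nth(1)[OF G Q ka(1)] ka(2) gdist_self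
      shortest_path_endpoints_in_set[OF Q] shortest_path_subset_V[OF Q]
    by (metis subsetD)
  then show ?thesis
    using gdist_shortest_path_nth(1)[OF G Q] k v ka kb by (metis le_less_trans max_0L)
qed

lemma sort3_bounds:
  fixes p q r :: nat
  shows "r + sort [p, q, r] ! 1 \<le> max p q + sort [p, q, r] ! 2"
    and "sort [p, q, r] ! 1 \<le> sort [p, q, r] ! 2"
  by (cases "p \<le> q"; cases "q \<le> r"; cases "p \<le> r"; simp add: max_def)+

lemma delta_quad_nonneg: "0 \<le> delta_quad V E w x y z"
  unfolding delta_quad_def Let_def using sort3_bounds(2) by simp

lemma delta_quad_le_delta_set:
  assumes "finite S" "w \<in> S" "x \<in> S" "y \<in> S" "z \<in> S"
  shows "delta_quad V E w x y z \<le> delta_set V E S"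
proof -
  have quads: "{delta_quad V E w1 w2 w3 w4 | w1 w2 w3 w4. w1 \<in> S \<and> w2 \<in> S \<and> w3 \<in> S \<and> w4 \<in> S}
      = (\<lambda>(a, b, c, d). delta_quad V E a b c d) ` (S \<times> S \<times> S \<times> S)"
    by force
  show ?thesis
    unfolding delta_set_def quads using assms by (intro Max_ge finite_imageI) force+
qed

lemma delta_set_nonneg: "finite S \<Longrightarrow> w \<in> S \<Longrightarrow> 0 \<le> delta_set V E S"
  using delta_quad_nonneg delta_quad_le_delta_set order_trans by metis

lemma gdist_four_point:
  assumes "finite S" "w \<in> S" "x \<in> S" "y \<in> S" "z \<in> S"
  shows "real (gdist V E w z + gdist V E x y) \<le>
    max (real (gdist V E w x + gdist V E y z)) (real (gdist V E w y + gdist V E x z))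
      + 2 * delta_set V E S"
proof -
  define p where "p = gdist V E w x + gdist V E y z"
  define q where "q = gdist V E w y + gdist V E x z"
  define r where "r = gdist V E w z + gdist V E x y"
  have "delta_quad V E w x y z = (real (sort [p, q, r] ! 2) - real (sort [p, q, r] ! 1)) / 2"
    unfolding delta_quad_def p_def q_def r_def Let_def by simp
  moreover have "real r + sort [p, q, r] ! 1 \<le> real (max p q) + sort [p, q, r] ! 2"
    using sort3_bounds(1)[of r p q] by linarith
  ultimately have "real r \<le> real (max p q) + 2 * delta_quad V E w x y z" by simp
  then show ?thesis
    using delta_quad_le_delta_set[OF assms, of V E] unfolding p_def q_def r_def
    by (simp add: of_nat_max)
qed

lemma gdist_equidistant_nodes_le:
  assumes G: "conn_graph V E" and S: "finite S" "set PL \<subseteq> S" "set PJ \<subseteq> S"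
    and PL: "shortest_path V E PL ui ul" and PJ: "shortest_path V E PJ ui uj"
    and v: "v \<in> set PL" and v': "v' \<in> set PJ" and eq: "gdist V E ui v = gdist V E ui v'"
    and gromov: "2 * gdist V E ui v + gdist V E uj ul \<le> gdist V E ui uj + gdist V E ui ul + 1"
  shows "real (gdist V E v v') \<le> 4 * delta_set V E S + 1"
proof -
  define D where "D = delta_set V E S"
  have inS: "ui \<in> S" "ul \<in> S" "uj \<in> S" "v \<in> S" "v' \<in> S"
    using shortest_path_endpoints_in_set[OF PL] shortest_path_endpoints_in_set[OF PJ] v v' S by auto
  have inV: "ul \<in> V" "uj \<in> V" "v' \<in> V"
    using shortest_path_endpoints_in_set[OF PL] shortest_path_endpoints_in_set[OF PJ] v'
      shortest_path_subset_V[OF PL] shortest_path_subset_V[OF PJ] by auto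
  have dv: "gdist V E ui v + gdist V E v ul = gdist V E ui ul"
    using gdist_shortest_path_node[OF G PL v] .
  have dv': "gdist V E ui v' + gdist V E v' uj = gdist V E ui uj"
    using gdist_shortest_path_node[OF G PJ v'] .
  have sym: "gdist V E ul uj = gdist V E uj ul" "gdist V E v' ul = gdist V E ul v'"
    using gdist_sym[OF G] inV by auto
  have D0: "0 \<le> D" unfolding D_def using delta_set_nonneg[OF S(1) inS(1)] .
  note four_point = gdist_four_point[OF S(1), of _ _ _ _ V E, folded D_def]
  have "real (gdist V E ul v') \<le> real (gdist V E ui ul) - gdist V E ui v + 2 * D + 1"
    using four_point[OF inS(1,2,5,3)] dv' eq gromov sym(1) by (simp add: max_def split: if_splits)
  then show ?thesis
    using four_point[OF inS(1,4,5,2)] dv eq sym(2) D0 unfolding D_def[symmetric]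
    by (simp add: max_def split: if_splits)
qed

lemma gromov_product_bounds:
  fixes a b c p0 p1 p2 :: nat
  assumes "p0 + p1 = a" "p1 + p2 = c" "int p0 = \<lfloor>(real a + real b - real c) / 2\<rfloor>"
  shows "2 * p0 + c \<le> a + b + 1" "2 * p1 + b \<le> a + c + 1" "2 * p2 + a \<le> b + c + 1"
proof -
  have "real p0 \<le> (real a + real b - real c) / 2" "(real a + real b - real c) / 2 < real p0 + 1"
    using floor_correct[of "(real a + real b - real c) / 2"] unfolding assms(3)[symmetric]
    by simp_all
  then have "real (2 * p0 + c) \<le> real (a + b)" "real (a + b) < real (2 * p0 + c + 2)"
    by simp_all
  then have "2 * p0 + c \<le> a + b" "a + b < 2 * p0 + c + 2"
    by (simp_all only: of_nat_le_iff of_nat_less_iff)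
  then show "2 * p0 + c \<le> a + b + 1" "2 * p1 + b \<le> a + c + 1" "2 * p2 + a \<le> b + c + 1"
    using assms(1,2) by linarith+
qed

theorem theorem2:
  fixes V :: "'a set" and E :: "'a \<Rightarrow> 'a \<Rightarrow> bool"
    and u :: "nat \<Rightarrow> 'a" and P :: "nat \<Rightarrow> nat \<Rightarrow> 'a list" and g :: "nat \<Rightarrow> nat \<Rightarrow> 'a"
    and i :: nat and v v' :: 'a
  assumes G: "conn_graph V E" and n4: "card V \<ge> 4"
    and uV: "\<forall>j<3. u j \<in> V"
    and udist: "u 0 \<noteq> u 1" "u 0 \<noteq> u 2" "u 1 \<noteq> u 2"
    and Psp: "\<forall>j<3. \<forall>k<3. j \<noteq> k \<longrightarrow> shortest_path V E (P j k) (u j) (u k)"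
    and Prev: "\<forall>j<3. \<forall>k<3. P k j = rev (P j k)"
    and gsym: "\<forall>j<3. \<forall>k<3. g k j = g j k"
    and gon: "g 0 1 \<in> set (P 0 1)" "g 0 2 \<in> set (P 0 2)" "g 1 2 \<in> set (P 1 2)"
    and g01: "gdist V E (u 0) (g 0 1) + gdist V E (u 1) (g 0 1) = gdist V E (u 0) (u 1)"
    and g02: "gdist V E (u 0) (g 0 2) + gdist V E (u 2) (g 0 2) = gdist V E (u 0) (u 2)"
    and g12: "gdist V E (u 1) (g 1 2) + gdist V E (u 2) (g 1 2) = gdist V E (u 1) (u 2)"
    and g1: "gdist V E (u 1) (g 0 1) = gdist V E (u 1) (g 1 2)"
    and g0a: "gdist V E (u 0) (g 0 1) = gdist V E (u 0) (g 0 2)"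
    and g0b: "int (gdist V E (u 0) (g 0 1)) =
       \<lfloor>(real (gdist V E (u 0) (u 1)) + real (gdist V E (u 0) (u 2))
          - real (gdist V E (u 1) (u 2))) / 2\<rfloor>"
    and i3: "i < 3"
    and v: "v \<in> subpath_nodes (P i ((i + 2) mod 3)) (u i) (g i ((i + 2) mod 3))"
    and v': "v' \<in> subpath_nodes (P i ((i + 1) mod 3)) (u i) (g i ((i + 1) mod 3))"
    and eq: "gdist V E (u i) v = gdist V E (u i) v'"
  shows "real (gdist V E v v') \<le>
           6 * delta_set V E (set (P 0 1) \<union> set (P 0 2) \<union> set (P 1 2)) + 2"
proof -
  define S where "S = set (P 0 1) \<union> set (P 0 2) \<union> set (P 1 2)"
  define j where "j = (i + 1) mod 3"
  define l where "l = (i + 2) mod 3"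
  have "i = 0 \<or> i = 1 \<or> i = 2" using i3 by arith
  then have corner: "i = 0 \<and> j = 1 \<and> l = 2 \<or> i = 1 \<and> j = 2 \<and> l = 0 \<or> i = 2 \<and> j = 0 \<and> l = 1"
    unfolding j_def l_def by (elim disjE) simp_all
  have sides: "set (P i l) \<subseteq> S" "set (P i j) \<subseteq> S"
    using corner Prev[rule_format, of 0 1] Prev[rule_format, of 0 2] Prev[rule_format, of 1 2]
    unfolding S_def by auto
  have Pil: "shortest_path V E (P i l) (u i) (u l)" and Pij: "shortest_path V E (P i j) (u i) (u j)"
    using Psp corner by auto
  have on_sides: "v \<in> set (P i l)" "v' \<in> set (P i j)"
    using v v' subpath_nodes_subset unfolding j_def l_def by (meson subsetD)+
  have "gdist V E (u 1) (u 0) = gdist V E (u 0) (u 1)" "gdist V E (u 2) (u 0) = gdist V E (u 0) (u 2)"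
    "gdist V E (u 2) (u 1) = gdist V E (u 1) (u 2)" "g 1 0 = g 0 1" "g 2 1 = g 1 2"
    using gdist_sym[OF G] uV gsym[rule_format, of 0 1] gsym[rule_format, of 1 2]
    by (auto simp: numeral_3_eq_3)
  note corner_data = this g0a gromov_product_bounds[OF g01 g12[folded g1] g0b]
  from corner have "2 * gdist V E (u i) (g i l) + gdist V E (u j) (u l)
      \<le> gdist V E (u i) (u j) + gdist V E (u i) (u l) + 1"
    by (elim disjE) (use corner_data in simp_all)
  then have "real (gdist V E v v') \<le> 4 * delta_set V E S + 1"
    using gdist_equidistant_nodes_le[OF G _ sides Pil Pij on_sides eq]
      gdist_subpath_nodes_le[OF G Pil v[folded l_def]]
    by (simp add: S_def)
  moreover have "0 \<le> delta_set V E S"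
    using delta_set_nonneg[OF _ subsetD[OF sides(1), of "u i"]] shortest_path_endpoints_in_set[OF Pil]
    by (simp add: S_def)
  ultimately show ?thesis unfolding S_def by linarith
qed

end
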